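(* Let $\hat q$ be an $n\times n$ and $\hat p$ an $m\times m$ parametric matrix, let $M$ be an $n\times m$ $(\hat q,\hat p)$-Manin matrix over $\mathfrak R$, and let $N$ be an $m\times s$ matrix over $\mathfrak R$ such that every entry $N_{ij}$ commutes with every entry $M_{kl}$. Let $I=(i_1<\dots<i_r)$ be an increasing multi-index with entries in $\{1,\dots,n\}$ and $K=(k_1,\dots,k_r)$ a multi-index with entries in $\{1,\dots,s\}$. If $r\le m$, then $$\mathrm{cdet}_{\hat q}((MN)_{IK})=\sum_J\mathrm{cdet}_{\hat q}(M_{IJ})\,\mathrm{cdet}_{\hat p}(N_{JK}),$$ the sum over all increasing multi-indices $J=(j_1<\dots<j_r)$ with entries in $\{1,\dots,m\}$; if $r>m$, then $\mathrm{cdet}_{\hat q}((MN)_{IK})=0$. In particular, if $m=n=s$, then $\mathrm{cdet}_{\hat q}(MN)=\mathrm{cdet}_{\hat q}(M)\,\mathrm{cdet}_{\hat p}(N)$.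
   Context: $\mathfrak R$ is an associative unital algebra over $\mathbb C$. A parametric $n\times n$ matrix is a matrix $\hat q=(q_{ij})$ of nonzero complex numbers with $q_{ij}q_{ji}=1$, $q_{ii}=1$. An $n\times m$ matrix $M$ over $\mathfrak R$ is a $(\hat q,\hat p)$-Manin matrix if $M_{ik}M_{jk}=q_{ji}M_{jk}M_{ik}$ for $i<j$ and all $k$, and $M_{ik}M_{jl}-q_{ji}p_{kl}M_{jl}M_{ik}+p_{kl}M_{il}M_{jk}-q_{ji}M_{jk}M_{il}=0$ for $i<j$, $k<l$. For increasing $I=(i_1<\dots<i_r)$ and $\sigma\in S_r$, $\varepsilon(\hat q,I,\sigma)=\prod_{s<t,\ \sigma(s)>\sigma(t)}(-q_{i_{\sigma(s)}i_{\sigma(t)}})$. For any matrix $X$, increasing $I$ and any multi-index $J=(j_1,\dots,j_r)$, $\mathrm{cdet}_{\hat q}(X_{IJ})=\sum_{\sigma\in S_r}\varepsilon(\hat q,I,\sigma)X_{i_{\sigma(1)},j_1}\cdots X_{i_{\sigma(r)},j_r}$; $\mathrm{cdet}_{\hat q}(X)$ is the case $I=J=(1,\dots,n)$. *)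

theory Defs
  imports Complex_Main "HOL-Combinatorics.Permutations"
begin

text \<open>The algebra R is a type 'a of class ring_1 (associative unital ring) together with
  a map c from the complex numbers into the centre of 'a which is a unital ring
  homomorphism (structure of a unital C-algebra; scalar multiplication z*x is c z * x).
  Matrices are functions nat => nat => 'a with indices starting from 1.
  Multi-indices are lists of natural numbers.\<close>

definition central_alg_hom :: "(complex \<Rightarrow> 'a::ring_1) \<Rightarrow> bool" where
  "central_alg_hom c \<longleftrightarrow>
     c 1 = 1 \<and> (\<forall>x y. c (x + y) = c x + c y) \<and> (\<forall>x y. c (x * y) = c x * c y)
     \<and> (\<forall>z a. c z * a = a * c z)"

definition parametric_matrix :: "nat \<Rightarrow> (nat \<Rightarrow> nat \<Rightarrow> complex) \<Rightarrow> bool" where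
  "parametric_matrix n q \<longleftrightarrow>
     (\<forall>i\<in>{1..n}. \<forall>j\<in>{1..n}. q i j \<noteq> 0 \<and> q i j * q j i = 1) \<and> (\<forall>i\<in>{1..n}. q i i = 1)"

definition manin :: "(complex \<Rightarrow> 'a::ring_1) \<Rightarrow> nat \<Rightarrow> nat \<Rightarrow> (nat \<Rightarrow> nat \<Rightarrow> complex)
    \<Rightarrow> (nat \<Rightarrow> nat \<Rightarrow> complex) \<Rightarrow> (nat \<Rightarrow> nat \<Rightarrow> 'a) \<Rightarrow> bool" where
  "manin c n m q p M \<longleftrightarrow>
     (\<forall>i\<in>{1..n}. \<forall>j\<in>{1..n}. \<forall>k\<in>{1..m}. i < j \<longrightarrow>
        M i k * M j k = c (q j i) * M j k * M i k) \<and>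
     (\<forall>i\<in>{1..n}. \<forall>j\<in>{1..n}. \<forall>k\<in>{1..m}. \<forall>l\<in>{1..m}. i < j \<longrightarrow> k < l \<longrightarrow>
        M i k * M j l - c (q j i * p k l) * M j l * M i k + c (p k l) * M i l * M j k
          - c (q j i) * M j k * M i l = 0)"

definition eps :: "(nat \<Rightarrow> nat \<Rightarrow> complex) \<Rightarrow> nat list \<Rightarrow> (nat \<Rightarrow> nat) \<Rightarrow> complex" where
  "eps q I \<sigma> = (\<Prod>(s, t) \<in> {(s, t). s < t \<and> t < length I \<and> \<sigma> s > \<sigma> t}.
                    - q (I ! \<sigma> s) (I ! \<sigma> t))"

text \<open>Column determinant cdet_q(X_{IJ}); positions 0..r-1 of the lists correspond to 1..r.\<close>
definition cdet :: "(complex \<Rightarrow> 'a::ring_1) \<Rightarrow> (nat \<Rightarrow> nat \<Rightarrow> complex) \<Rightarrow> (nat \<Rightarrow> nat \<Rightarrow> 'a)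
    \<Rightarrow> nat list \<Rightarrow> nat list \<Rightarrow> 'a" where
  "cdet c q X I J = (\<Sum>\<sigma> | \<sigma> permutes {..<length I}.
      c (eps q I \<sigma>) * prod_list (map (\<lambda>k. X (I ! \<sigma> k) (J ! k)) [0..<length I]))"

definition matmul :: "nat \<Rightarrow> (nat \<Rightarrow> nat \<Rightarrow> 'a::ring_1) \<Rightarrow> (nat \<Rightarrow> nat \<Rightarrow> 'a) \<Rightarrow> (nat \<Rightarrow> nat \<Rightarrow> 'a)" where
  "matmul m M N = (\<lambda>i k. \<Sum>l = 1..m. M i l * N l k)"

definition incr_multi_indices :: "nat \<Rightarrow> nat \<Rightarrow> nat list set" where
  "incr_multi_indices r m = {J. length J = r \<and> sorted_wrt (<) J \<and> set J \<subseteq> {1..m}}"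

end

theory Submission
  imports Defs
begin

text \<open>Expanding the entries of MN, and using that the entries of N commute with those of M,
  turns cdet_q((MN)_IK) into the sum, over all column sequences L, of cdet_q(M_IL) times
  N_(l_1 k_1) ... N_(l_r k_r). Pairing the terms sigma and sigma o (t t+1) of the column
  determinant, the Manin relations show that cdet_q(M_IL) vanishes when two adjacent entries of L
  coincide, and picks up the factor -p_lk when adjacent entries k < l are swapped. Sorting by
  adjacent swaps then gives cdet_q(M_IL) = 0 whenever L has a repeated entry, and
  cdet_q(M_(I, tau J)) = eps(p, J, tau) cdet_q(M_IJ) for increasing J. Writing each
  repetition-free L uniquely as tau J regroups the sum into the sum over increasing J of
  cdet_q(M_IJ) cdet_p(N_JK), which is empty when r > m.\<close>

section \<open>Adjacent transpositions and inversions\<close>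

abbreviation adjacent_transpose :: "nat \<Rightarrow> nat \<Rightarrow> nat" where
  "adjacent_transpose t \<equiv> Transposition.transpose t (Suc t)"

lemma adjacent_transpose_permutes: "Suc t < r \<Longrightarrow> adjacent_transpose t permutes {..<r}"
  by (simp add: permutes_swap_id)

lemma permute_list_adjacent_transpose_eq:
  assumes "Suc t < length xs" "xs ! t = xs ! Suc t"
  shows "permute_list (adjacent_transpose t) xs = xs"
  using assms by (intro nth_equalityI) (auto simp: permute_list_def Transposition.transpose_def)

definition perm_inversions :: "(nat \<Rightarrow> nat) \<Rightarrow> nat \<Rightarrow> (nat \<times> nat) set" where
  "perm_inversions \<sigma> r = {(a, b). a < b \<and> b < r \<and> \<sigma> b < \<sigma> a}"

lemma finite_perm_inversions [simp]: "finite (perm_inversions \<sigma> r)"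
  by (rule finite_subset[of _ "{..<r} \<times> {..<r}"]) (auto simp: perm_inversions_def)

lemma eps_eq_prod_perm_inversions:
  "eps q I \<sigma> = (\<Prod>(a, b) \<in> perm_inversions \<sigma> (length I). - q (I ! \<sigma> a) (I ! \<sigma> b))"
  by (simp add: eps_def perm_inversions_def)

lemma eps_id [simp]: "eps q I id = 1"
proof -
  have "perm_inversions id (length I) = {}"
    by (auto simp: perm_inversions_def)
  then show ?thesis
    by (simp add: eps_eq_prod_perm_inversions)
qed

lemma perm_inversions_comp_adjacent_transpose:
  assumes "Suc t < r" "\<sigma> t < \<sigma> (Suc t)"
  defines "sw \<equiv> map_prod (adjacent_transpose t) (adjacent_transpose t)"
  shows "perm_inversions (\<sigma> \<circ> adjacent_transpose t) r = insert (t, Suc t) (sw ` perm_inversions \<sigma> r)"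
    and "(t, Suc t) \<notin> sw ` perm_inversions \<sigma> r"
    and "inj sw"
proof -
  show "inj sw"
    unfolding sw_def using map_prod_inj_on[OF inj_transpose inj_transpose] by simp
  have sw_image: "sw ` A = {x. sw x \<in> A}" for A
    unfolding sw_def by (force simp: image_iff)
  show "(t, Suc t) \<notin> sw ` perm_inversions \<sigma> r"
    unfolding sw_image using assms by (simp add: sw_def perm_inversions_def)
  show "perm_inversions (\<sigma> \<circ> adjacent_transpose t) r = insert (t, Suc t) (sw ` perm_inversions \<sigma> r)"
    unfolding sw_image using assms
    by (auto simp: sw_def perm_inversions_def Transposition.transpose_def split: if_splits)
qed

lemma card_perm_inversions_comp_adjacent_transpose:
  assumes "Suc t < r" "\<sigma> t < \<sigma> (Suc t)"
  shows "card (perm_inversions (\<sigma> \<circ> adjacent_transpose t) r) = Suc (card (perm_inversions \<sigma> r))"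
  using perm_inversions_comp_adjacent_transpose[OF assms]
  by (simp add: card_image inj_on_subset[of _ UNIV])

lemma eps_comp_adjacent_transpose:
  assumes "Suc t < length I" "\<sigma> t < \<sigma> (Suc t)"
  shows "eps q I (\<sigma> \<circ> adjacent_transpose t) = - q (I ! \<sigma> (Suc t)) (I ! \<sigma> t) * eps q I \<sigma>"
proof -
  let ?sw = "map_prod (adjacent_transpose t) (adjacent_transpose t)"
  let ?f = "\<lambda>\<rho> (a, b). - q (I ! \<rho> a) (I ! \<rho> b)"
  note inv = perm_inversions_comp_adjacent_transpose[OF assms]
  have "eps q I (\<sigma> \<circ> adjacent_transpose t)
      = ?f (\<sigma> \<circ> adjacent_transpose t) (t, Suc t) * prod (?f (\<sigma> \<circ> adjacent_transpose t)) (?sw ` perm_inversions \<sigma> (length I))"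
    unfolding eps_eq_prod_perm_inversions inv(1) using inv(2) by simp
  also have "prod (?f (\<sigma> \<circ> adjacent_transpose t)) (?sw ` perm_inversions \<sigma> (length I)) = eps q I \<sigma>"
    unfolding eps_eq_prod_perm_inversions using inv(3)
    by (subst prod.reindex) (auto intro: inj_on_subset prod.cong)
  finally show ?thesis
    unfolding comp_def by simp
qed

lemma permutes_perm_inversions_empty:
  assumes "\<sigma> permutes {..<r}" "perm_inversions \<sigma> r = {}"
  shows "\<sigma> = id"
proof -
  have "\<sigma> a < \<sigma> b" if "a < b" "b < r" for a b
  proof -
    have "\<not> \<sigma> b < \<sigma> a"
      using assms(2) that by (auto simp: perm_inversions_def)
    moreover have "\<sigma> a \<noteq> \<sigma> b"
      using permutes_inj[OF assms(1)] that by (simp add: inj_eq)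
    ultimately show ?thesis by simp
  qed
  then have "sorted_wrt (<) (map \<sigma> [0..<r])"
    unfolding sorted_wrt_iff_nth_less by simp
  moreover have "set (map \<sigma> [0..<r]) = set [0..<r]"
    using permutes_image[OF assms(1)] by (simp add: lessThan_atLeast0)
  ultimately have "map \<sigma> [0..<r] = [0..<r]"
    by (intro sorted_distinct_set_unique) (auto simp: strict_sorted_iff)
  then have "\<sigma> k = k" if "k < r" for k
    using that by (metis map_eq_conv map_ident atLeastLessThan_iff set_upt zero_le)
  moreover have "\<sigma> k = k" if "\<not> k < r" for k
    using assms(1) that by (simp add: permutes_def)
  ultimately show ?thesis
    by (auto simp: fun_eq_iff)
qed

lemma perm_inversions_adjacent_descent:
  assumes "perm_inversions \<sigma> r \<noteq> {}"
  obtains t where "Suc t < r" "\<sigma> (Suc t) < \<sigma> t"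
proof -
  obtain a b where ab: "a < b" "b < r" "\<sigma> b < \<sigma> a"
    using assms by (auto simp: perm_inversions_def)
  have "\<not> sorted (map \<sigma> [0..<r])"
    using ab by (fastforce simp: sorted_iff_nth_mono_less)
  then show ?thesis
    using that by (auto simp: sorted_iff_nth_Suc not_le)
qed

lemma permutes_adjacent_transpose_induct [consumes 1, case_names id step]:
  assumes "\<sigma> permutes {..<r}"
    and "P id"
    and "\<And>\<tau> t. \<tau> permutes {..<r} \<Longrightarrow> Suc t < r \<Longrightarrow> \<tau> t < \<tau> (Suc t) \<Longrightarrow> P \<tau>
           \<Longrightarrow> P (\<tau> \<circ> adjacent_transpose t)"
  shows "P \<sigma>"
  using assms(1)
proof (induction \<sigma> rule: measure_induct_rule[of "\<lambda>\<sigma>. card (perm_inversions \<sigma> r)"])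
  case (less \<sigma>)
  show ?case
  proof (cases "perm_inversions \<sigma> r = {}")
    case True
    then show ?thesis
      using permutes_perm_inversions_empty[OF less.prems] assms(2) by (simp only:)
  next
    case False
    then obtain t where t: "Suc t < r" "\<sigma> (Suc t) < \<sigma> t"
      by (rule perm_inversions_adjacent_descent)
    define \<tau> where "\<tau> = \<sigma> \<circ> adjacent_transpose t"
    have \<tau>: "\<tau> permutes {..<r}" "\<tau> t < \<tau> (Suc t)"
      using t less.prems by (auto simp: \<tau>_def intro: permutes_compose adjacent_transpose_permutes)
    have \<sigma>: "\<sigma> = \<tau> \<circ> adjacent_transpose t"
      by (simp add: \<tau>_def comp_assoc)
    have "P \<tau>"
      using less.IH \<tau>(1) card_perm_inversions_comp_adjacent_transpose[OF t(1) \<tau>(2)]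
      unfolding \<sigma> by simp
    then show ?thesis
      using assms(3)[OF \<tau>(1) t(1) \<tau>(2)] \<sigma> by (simp only:)
  qed
qed

lemma sum_permutes_adjacent_pairs:
  fixes g :: "(nat \<Rightarrow> nat) \<Rightarrow> 'b::comm_monoid_add"
  assumes t: "Suc t < r"
  shows "(\<Sum>\<sigma> | \<sigma> permutes {..<r}. g \<sigma>)
       = (\<Sum>\<sigma> | \<sigma> permutes {..<r} \<and> \<sigma> t < \<sigma> (Suc t). g \<sigma> + g (\<sigma> \<circ> adjacent_transpose t))"
proof -
  let ?A = "{\<sigma>. \<sigma> permutes {..<r} \<and> \<sigma> t < \<sigma> (Suc t)}"
  let ?B = "{\<sigma>. \<sigma> permutes {..<r} \<and> \<sigma> (Suc t) < \<sigma> t}"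
  have fin: "finite ?A" "finite ?B"
    using finite_permutations[of "{..<r}"] by (simp_all add: finite_subset)
  have "\<sigma> t < \<sigma> (Suc t) \<or> \<sigma> (Suc t) < \<sigma> t" if "\<sigma> permutes {..<r}" for \<sigma>
    using permutes_inj[OF that] by (metis inj_eq n_not_Suc_n linorder_neqE_nat)
  then have split: "{\<sigma>. \<sigma> permutes {..<r}} = ?A \<union> ?B"
    by blast
  have "(\<Sum>\<sigma> | \<sigma> permutes {..<r}. g \<sigma>) = sum g ?A + sum g ?B"
    unfolding split by (rule sum.union_disjoint[OF fin]) auto
  also have "sum g ?B = (\<Sum>\<sigma>\<in>?A. g (\<sigma> \<circ> adjacent_transpose t))"
  proof (rule sum.reindex_bij_witness[of _ "\<lambda>\<sigma>. \<sigma> \<circ> adjacent_transpose t" "\<lambda>\<sigma>. \<sigma> \<circ> adjacent_transpose t"])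
    have swap_permutes: "\<sigma> \<circ> adjacent_transpose t permutes {..<r}" if "\<sigma> permutes {..<r}" for \<sigma>
      by (rule permutes_compose[OF adjacent_transpose_permutes[OF t] that])
    then show "\<sigma> \<circ> adjacent_transpose t \<in> ?A" if "\<sigma> \<in> ?B" for \<sigma>
      using that by simp
    show "\<sigma> \<circ> adjacent_transpose t \<in> ?B" if "\<sigma> \<in> ?A" for \<sigma>
      using that swap_permutes by simp
  qed (simp_all add: comp_assoc)
  finally show ?thesis
    by (simp add: sum.distrib)
qed

section \<open>Products of noncommuting factors\<close>

lemma prod_list_map_upt_split_adjacent:
  assumes "Suc t < r"
  shows "prod_list (map h [0..<r])
       = prod_list (map h [0..<t]) * (h t * h (Suc t)) * prod_list (map h [Suc (Suc t)..<r])"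
proof -
  have "[0..<r] = [0..<t] @ t # Suc t # [Suc (Suc t)..<r]"
    using assms upt_add_eq_append[of 0 t "r - t"] by (simp add: upt_conv_Cons)
  then show ?thesis
    by (simp add: mult.assoc)
qed

lemma prod_list_sum_expand:
  fixes g :: "nat \<Rightarrow> 'b \<Rightarrow> 'a::semiring_1"
  shows "prod_list (map (\<lambda>k. \<Sum>l\<in>A. g k l) [0..<r])
       = (\<Sum>L | set L \<subseteq> A \<and> length L = r. prod_list (map (\<lambda>k. g k (L ! k)) [0..<r]))"
proof (induction r)
  case 0
  have "{L. set L \<subseteq> A \<and> length L = 0} = {[]}"
    by auto
  then show ?case
    by simp
next
  case (Suc r)
  let ?lists = "\<lambda>r. {L. set L \<subseteq> A \<and> length L = r}"
  have "prod_list (map (\<lambda>k. \<Sum>l\<in>A. g k l) [0..<Suc r])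
      = prod_list (map (\<lambda>k. \<Sum>l\<in>A. g k l) [0..<r]) * (\<Sum>l\<in>A. g r l)"
    by simp
  also have "\<dots> = (\<Sum>L\<in>?lists r. \<Sum>l\<in>A. prod_list (map (\<lambda>k. g k (L ! k)) [0..<r]) * g r l)"
    unfolding Suc sum_product ..
  also have "\<dots> = (\<Sum>(L, l)\<in>?lists r \<times> A. prod_list (map (\<lambda>k. g k (L ! k)) [0..<r]) * g r l)"
    by (rule sum.cartesian_product)
  also have "\<dots> = (\<Sum>L\<in>?lists (Suc r). prod_list (map (\<lambda>k. g k (L ! k)) [0..<Suc r]))"
  proof (rule sum.reindex_bij_witness[of _ "\<lambda>L. (butlast L, last L)" "\<lambda>(L, l). L @ [l]"])
    fix L assume L: "L \<in> ?lists (Suc r)"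
    then have "L \<noteq> []"
      by auto
    then show "(\<lambda>(L, l). L @ [l]) (butlast L, last L) = L"
      by simp
    show "(butlast L, last L) \<in> ?lists r \<times> A"
      using L \<open>L \<noteq> []\<close> in_set_butlastD[of _ L] last_in_set[of L] by auto
  next
    fix x assume "x \<in> ?lists r \<times> A"
    then obtain L l where x: "x = (L, l)" "set L \<subseteq> A" "length L = r" "l \<in> A"
      by auto
    show "(butlast ((\<lambda>(L, l). L @ [l]) x), last ((\<lambda>(L, l). L @ [l]) x)) = x"
      "(\<lambda>(L, l). L @ [l]) x \<in> ?lists (Suc r)"
      using x by simp_all
    have prefix: "map (\<lambda>k. g k ((L @ [l]) ! k)) [0..<length L] = map (\<lambda>k. g k (L ! k)) [0..<length L]"
      by (simp add: nth_append)
    show "prod_list (map (\<lambda>k. g k ((\<lambda>(L, l). L @ [l]) x ! k)) [0..<Suc r])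
        = (\<lambda>(L, l). prod_list (map (\<lambda>k. g k (L ! k)) [0..<r]) * g r l) x"
      using x by (simp add: prefix flip: x(3))
  qed
  finally show ?case .
qed

lemma prod_list_map_commute:
  fixes z :: "'a::monoid_mult"
  assumes "\<forall>y\<in>set xs. z * a y = a y * z"
  shows "z * prod_list (map a xs) = prod_list (map a xs) * z"
  using assms
proof (induction xs)
  case (Cons y xs)
  then have "z * (a y * prod_list (map a xs)) = a y * (z * prod_list (map a xs))"
    by (metis mult.assoc list.set_intros(1))
  also have "\<dots> = a y * (prod_list (map a xs) * z)"
    using Cons by simp
  finally show ?case
    by (simp add: mult.assoc)
qed simp

lemma prod_list_map_mult_commute:
  fixes a b :: "'b \<Rightarrow> 'a::monoid_mult"
  assumes "\<forall>x\<in>set xs. \<forall>y\<in>set xs. b x * a y = a y * b x"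
  shows "prod_list (map (\<lambda>x. a x * b x) xs) = prod_list (map a xs) * prod_list (map b xs)"
  using assms
proof (induction xs)
  case (Cons x xs)
  have commute: "b x * prod_list (map a xs) = prod_list (map a xs) * b x"
    by (rule prod_list_map_commute) (use Cons.prems in auto)
  have "prod_list (map (\<lambda>x. a x * b x) (x # xs)) = a x * (b x * prod_list (map a xs)) * prod_list (map b xs)"
    using Cons by (simp add: mult.assoc)
  also have "\<dots> = a x * (prod_list (map a xs) * b x) * prod_list (map b xs)"
    unfolding commute ..
  finally show ?case
    by (simp add: mult.assoc)
qed simp

section \<open>Column determinants under adjacent column swaps\<close>

lemma
  assumes "central_alg_hom c"
  shows central_alg_hom_commute: "c z * x = x * c z"
    and central_alg_hom_mult: "c (z * w) = c z * c w"
    and central_alg_hom_one: "c 1 = 1"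
    and central_alg_hom_uminus: "c (- z) = - c z"
proof -
  have add: "c (z + w) = c z + c w" for z w
    using assms unfolding central_alg_hom_def by blast
  show "c z * x = x * c z" "c (z * w) = c z * c w" "c 1 = 1"
    using assms unfolding central_alg_hom_def by blast+
  have "c 0 = 0"
    using add[of 0 0] by simp
  then show "c (- z) = - c z"
    using add[of z "- z"] minus_unique[of "c z" "c (- z)"] by simp
qed

lemma central_alg_hom_sandwich:
  assumes "central_alg_hom c"
  shows "c z * (A * X * B) = A * (c z * X) * B"
proof -
  have "c z * A = A * c z"
    by (rule central_alg_hom_commute[OF assms])
  then show ?thesis
    by (metis mult.assoc)
qed

definition perm_monomial :: "(nat \<Rightarrow> nat \<Rightarrow> 'a::monoid_mult) \<Rightarrow> nat list \<Rightarrow> nat list \<Rightarrow> (nat \<Rightarrow> nat) \<Rightarrow> 'a" where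
  "perm_monomial X I J \<sigma> = prod_list (map (\<lambda>k. X (I ! \<sigma> k) (J ! k)) [0..<length I])"

lemma cdet_eq_sum_perm_monomial:
  "cdet c q X I J = (\<Sum>\<sigma> | \<sigma> permutes {..<length I}. c (eps q I \<sigma>) * perm_monomial X I J \<sigma>)"
  by (simp add: cdet_def perm_monomial_def)

lemma perm_monomial_adjacent_factor:
  assumes "Suc t < length I" "length L = length I"
  obtains A B where
    "\<And>\<tau> \<Lambda>. \<tau> \<in> {\<sigma>, \<sigma> \<circ> adjacent_transpose t} \<Longrightarrow> \<Lambda> \<in> {L, permute_list (adjacent_transpose t) L} \<Longrightarrow>
       perm_monomial X I \<Lambda> \<tau> = A * (X (I ! \<tau> t) (\<Lambda> ! t) * X (I ! \<tau> (Suc t)) (\<Lambda> ! Suc t)) * B"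
proof
  fix \<tau> \<Lambda>
  assume \<tau>: "\<tau> \<in> {\<sigma>, \<sigma> \<circ> adjacent_transpose t}" and \<Lambda>: "\<Lambda> \<in> {L, permute_list (adjacent_transpose t) L}"
  let ?h = "\<lambda>\<tau> \<Lambda> k. X (I ! \<tau> k) (\<Lambda> ! k)"
  have outside: "?h \<tau> \<Lambda> k = ?h \<sigma> L k" if "k < length I" "k \<noteq> t" "k \<noteq> Suc t" for k
    using \<tau> \<Lambda> that assms by (auto simp: permute_list_def)
  have same_ends: "map (?h \<tau> \<Lambda>) [0..<t] = map (?h \<sigma> L) [0..<t]"
       "map (?h \<tau> \<Lambda>) [Suc (Suc t)..<length I] = map (?h \<sigma> L) [Suc (Suc t)..<length I]"
    using assms by (auto intro!: map_cong outside)
  show "perm_monomial X I \<Lambda> \<tau>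
      = prod_list (map (?h \<sigma> L) [0..<t]) * (?h \<tau> \<Lambda> t * ?h \<tau> \<Lambda> (Suc t))
        * prod_list (map (?h \<sigma> L) [Suc (Suc t)..<length I])"
    unfolding perm_monomial_def prod_list_map_upt_split_adjacent[OF assms(1)] same_ends ..
qed

lemma cdet_terms_pair_adjacent_transpose:
  assumes hom: "central_alg_hom c"
    and t: "Suc t < length I" and L: "length L = length I" and \<sigma>: "\<sigma> t < \<sigma> (Suc t)"
  defines "i \<equiv> I ! \<sigma> t" and "j \<equiv> I ! \<sigma> (Suc t)"
  obtains A B where "\<And>\<Lambda>. \<Lambda> \<in> {L, permute_list (adjacent_transpose t) L} \<Longrightarrow>
      c (eps q I \<sigma>) * perm_monomial X I \<Lambda> \<sigma>
        + c (eps q I (\<sigma> \<circ> adjacent_transpose t)) * perm_monomial X I \<Lambda> (\<sigma> \<circ> adjacent_transpose t)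
      = c (eps q I \<sigma>) * (A * (X i (\<Lambda> ! t) * X j (\<Lambda> ! Suc t)
          - c (q j i) * (X j (\<Lambda> ! t) * X i (\<Lambda> ! Suc t))) * B)"
proof -
  obtain A B where AB: "\<And>\<tau> \<Lambda>. \<tau> \<in> {\<sigma>, \<sigma> \<circ> adjacent_transpose t} \<Longrightarrow> \<Lambda> \<in> {L, permute_list (adjacent_transpose t) L} \<Longrightarrow>
       perm_monomial X I \<Lambda> \<tau> = A * (X (I ! \<tau> t) (\<Lambda> ! t) * X (I ! \<tau> (Suc t)) (\<Lambda> ! Suc t)) * B"
    using perm_monomial_adjacent_factor[OF t L] by blast
  have eps_swap: "c (eps q I (\<sigma> \<circ> adjacent_transpose t)) = - (c (eps q I \<sigma>) * c (q j i))"
    using eps_comp_adjacent_transpose[OF t \<sigma>, of q] central_alg_hom_commute[OF hom, of _ "c (eps q I \<sigma>)"]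
    by (simp add: i_def j_def central_alg_hom_mult[OF hom] central_alg_hom_uminus[OF hom])
  show thesis
  proof
    fix \<Lambda> assume \<Lambda>: "\<Lambda> \<in> {L, permute_list (adjacent_transpose t) L}"
    have "c (eps q I \<sigma>) * perm_monomial X I \<Lambda> \<sigma>
        + c (eps q I (\<sigma> \<circ> adjacent_transpose t)) * perm_monomial X I \<Lambda> (\<sigma> \<circ> adjacent_transpose t)
      = c (eps q I \<sigma>) * (A * (X i (\<Lambda> ! t) * X j (\<Lambda> ! Suc t)) * B
          - c (q j i) * (A * (X j (\<Lambda> ! t) * X i (\<Lambda> ! Suc t)) * B))"
      using AB[OF _ \<Lambda>, of \<sigma>] AB[OF _ \<Lambda>, of "\<sigma> \<circ> adjacent_transpose t"]
      by (simp add: eps_swap i_def j_def right_diff_distrib mult.assoc)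
    also have "\<dots> = c (eps q I \<sigma>) * (A * (X i (\<Lambda> ! t) * X j (\<Lambda> ! Suc t)
          - c (q j i) * (X j (\<Lambda> ! t) * X i (\<Lambda> ! Suc t))) * B)"
      by (simp add: central_alg_hom_sandwich[OF hom] left_diff_distrib right_diff_distrib)
    finally show "c (eps q I \<sigma>) * perm_monomial X I \<Lambda> \<sigma>
        + c (eps q I (\<sigma> \<circ> adjacent_transpose t)) * perm_monomial X I \<Lambda> (\<sigma> \<circ> adjacent_transpose t)
      = c (eps q I \<sigma>) * (A * (X i (\<Lambda> ! t) * X j (\<Lambda> ! Suc t)
          - c (q j i) * (X j (\<Lambda> ! t) * X i (\<Lambda> ! Suc t))) * B)" .
  qed
qed

lemma permuted_rows_ordered_at_ascent:
  assumes "sorted_wrt (<) I" "set I \<subseteq> {1..n}"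
    and "\<sigma> permutes {..<length I}" "Suc t < length I" "\<sigma> t < \<sigma> (Suc t)"
  shows "I ! \<sigma> t < I ! \<sigma> (Suc t)" "I ! \<sigma> t \<in> {1..n}" "I ! \<sigma> (Suc t) \<in> {1..n}"
proof -
  have "\<sigma> t < length I" "\<sigma> (Suc t) < length I"
    using assms(3,4) permutes_in_image by fastforce+
  then show "I ! \<sigma> t < I ! \<sigma> (Suc t)" "I ! \<sigma> t \<in> {1..n}" "I ! \<sigma> (Suc t) \<in> {1..n}"
    using assms(1,2,5) sorted_wrt_nth_less nth_mem by blast+
qed

context
  fixes c :: "complex \<Rightarrow> 'a::ring_1" and n m :: nat and q p :: "nat \<Rightarrow> nat \<Rightarrow> complex"
    and M :: "nat \<Rightarrow> nat \<Rightarrow> 'a" and I :: "nat list"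
  assumes hom: "central_alg_hom c" and manin: "manin c n m q p M"
    and I_sorted: "sorted_wrt (<) I" and I_range: "set I \<subseteq> {1..n}"
begin

lemma cdet_adjacent_equal_columns:
  assumes L: "length L = length I" "set L \<subseteq> {1..m}"
    and t: "Suc t < length I" and eq: "L ! t = L ! Suc t"
  shows "cdet c q M I L = 0"
proof -
  have "c (eps q I \<sigma>) * perm_monomial M I L \<sigma>
      + c (eps q I (\<sigma> \<circ> adjacent_transpose t)) * perm_monomial M I L (\<sigma> \<circ> adjacent_transpose t) = 0"
    if \<sigma>: "\<sigma> permutes {..<length I}" "\<sigma> t < \<sigma> (Suc t)" for \<sigma>
  proof -
    obtain A B where AB: "\<And>\<Lambda>. \<Lambda> \<in> {L, permute_list (adjacent_transpose t) L} \<Longrightarrow>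
        c (eps q I \<sigma>) * perm_monomial M I \<Lambda> \<sigma>
          + c (eps q I (\<sigma> \<circ> adjacent_transpose t)) * perm_monomial M I \<Lambda> (\<sigma> \<circ> adjacent_transpose t)
        = c (eps q I \<sigma>) * (A * (M (I ! \<sigma> t) (\<Lambda> ! t) * M (I ! \<sigma> (Suc t)) (\<Lambda> ! Suc t)
            - c (q (I ! \<sigma> (Suc t)) (I ! \<sigma> t)) * (M (I ! \<sigma> (Suc t)) (\<Lambda> ! t) * M (I ! \<sigma> t) (\<Lambda> ! Suc t))) * B)"
      using cdet_terms_pair_adjacent_transpose[OF hom t L(1) \<sigma>(2), where q = q and X = M] by blast
    have "L ! t \<in> {1..m}"
      using L t by (metis Suc_lessD nth_mem subsetD)
    then have "M (I ! \<sigma> t) (L ! t) * M (I ! \<sigma> (Suc t)) (L ! t)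
        = c (q (I ! \<sigma> (Suc t)) (I ! \<sigma> t)) * (M (I ! \<sigma> (Suc t)) (L ! t) * M (I ! \<sigma> t) (L ! t))"
      using manin permuted_rows_ordered_at_ascent[OF I_sorted I_range \<sigma>(1) t \<sigma>(2)]
      unfolding manin_def by (simp add: mult.assoc)
    then show ?thesis
      using AB[of L] eq by simp
  qed
  then show ?thesis
    unfolding cdet_eq_sum_perm_monomial sum_permutes_adjacent_pairs[OF t] by simp
qed

lemma cdet_adjacent_columns_relation:
  assumes L: "length L = length I" "set L \<subseteq> {1..m}"
    and t: "Suc t < length I" and lt: "L ! t < L ! Suc t"
  shows "cdet c q M I L + c (p (L ! t) (L ! Suc t)) * cdet c q M I (permute_list (adjacent_transpose t) L) = 0"
proof -
  let ?L' = "permute_list (adjacent_transpose t) L"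
  let ?k = "L ! t" and ?l = "L ! Suc t"
  define g where "g \<sigma> = c (eps q I \<sigma>) * perm_monomial M I L \<sigma> + c (p ?k ?l) * (c (eps q I \<sigma>) * perm_monomial M I ?L' \<sigma>)"
    for \<sigma>
  have kl: "?k \<in> {1..m}" "?l \<in> {1..m}"
    using L t by (metis Suc_lessD nth_mem subsetD)+
  have L': "?L' ! t = ?l" "?L' ! Suc t = ?k"
    using L t by (simp_all add: permute_list_def)
  have "g \<sigma> + g (\<sigma> \<circ> adjacent_transpose t) = 0"
    if \<sigma>: "\<sigma> permutes {..<length I}" "\<sigma> t < \<sigma> (Suc t)" for \<sigma>
  proof -
    define i j where "i = I ! \<sigma> t" and "j = I ! \<sigma> (Suc t)"
    obtain A B where AB: "\<And>\<Lambda>. \<Lambda> \<in> {L, ?L'} \<Longrightarrow>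
        c (eps q I \<sigma>) * perm_monomial M I \<Lambda> \<sigma>
          + c (eps q I (\<sigma> \<circ> adjacent_transpose t)) * perm_monomial M I \<Lambda> (\<sigma> \<circ> adjacent_transpose t)
        = c (eps q I \<sigma>) * (A * (M i (\<Lambda> ! t) * M j (\<Lambda> ! Suc t)
            - c (q j i) * (M j (\<Lambda> ! t) * M i (\<Lambda> ! Suc t))) * B)"
      unfolding i_def j_def using cdet_terms_pair_adjacent_transpose[OF hom t L(1) \<sigma>(2), where q = q and X = M] by blast
    have ij: "i < j" "i \<in> {1..n}" "j \<in> {1..n}"
      unfolding i_def j_def by (fact permuted_rows_ordered_at_ascent[OF I_sorted I_range \<sigma>(1) t \<sigma>(2)])+
    have "M i ?k * M j ?l - c (q j i) * (M j ?k * M i ?l)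
        + c (p ?k ?l) * (M i ?l * M j ?k - c (q j i) * (M j ?l * M i ?k)) = 0"
      using manin ij kl lt unfolding manin_def
      by (simp add: algebra_simps central_alg_hom_mult[OF hom] central_alg_hom_commute[OF hom, of "p ?k ?l" "c (q j i)"])
    moreover have "c (p ?k ?l) * (c (eps q I \<sigma>) * X) = c (eps q I \<sigma>) * (c (p ?k ?l) * X)" for X
      using central_alg_hom_commute[OF hom, of "p ?k ?l" "c (eps q I \<sigma>)"] by (metis mult.assoc)
    ultimately have cancel: "c (eps q I \<sigma>) * (A * (M i ?k * M j ?l - c (q j i) * (M j ?k * M i ?l)) * B)
        + c (p ?k ?l) * (c (eps q I \<sigma>) * (A * (M i ?l * M j ?k - c (q j i) * (M j ?l * M i ?k)) * B)) = 0"
      by (simp add: central_alg_hom_sandwich[OF hom] flip: distrib_left distrib_right)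
    let ?\<sigma>' = "\<sigma> \<circ> adjacent_transpose t"
    have "g \<sigma> + g ?\<sigma>'
        = (c (eps q I \<sigma>) * perm_monomial M I L \<sigma> + c (eps q I ?\<sigma>') * perm_monomial M I L ?\<sigma>')
          + c (p ?k ?l) * (c (eps q I \<sigma>) * perm_monomial M I ?L' \<sigma> + c (eps q I ?\<sigma>') * perm_monomial M I ?L' ?\<sigma>')"
      unfolding g_def by (simp add: distrib_left add_ac)
    also have "\<dots> = 0"
      unfolding AB[of L, simplified] AB[of ?L', simplified] L' by (fact cancel)
    finally show ?thesis .
  qed
  then have "(\<Sum>\<sigma> | \<sigma> permutes {..<length I}. g \<sigma>) = 0"
    unfolding sum_permutes_adjacent_pairs[OF t] by simp
  then show ?thesis
    unfolding g_def cdet_eq_sum_perm_monomial by (simp add: sum.distrib sum_distrib_left)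
qed

lemma cdet_swap_adjacent_columns:
  assumes p: "parametric_matrix m p"
    and L: "length L = length I" "set L \<subseteq> {1..m}"
    and t: "Suc t < length I" and lt: "L ! t < L ! Suc t"
  shows "cdet c q M I (permute_list (adjacent_transpose t) L) = c (- p (L ! Suc t) (L ! t)) * cdet c q M I L"
proof -
  let ?k = "L ! t" and ?l = "L ! Suc t"
  have "?k \<in> {1..m}" "?l \<in> {1..m}"
    using L t by (metis Suc_lessD nth_mem subsetD)+
  then have inverse: "c (p ?l ?k) * c (p ?k ?l) = 1"
    using p unfolding parametric_matrix_def
    by (metis central_alg_hom_mult[OF hom] central_alg_hom_one[OF hom] mult.commute)
  have "c (p ?l ?k) * (cdet c q M I L + c (p ?k ?l) * cdet c q M I (permute_list (adjacent_transpose t) L)) = 0"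
    by (simp add: cdet_adjacent_columns_relation[OF L t lt])
  then have "c (p ?l ?k) * cdet c q M I L + cdet c q M I (permute_list (adjacent_transpose t) L) = 0"
    by (simp add: distrib_left inverse flip: mult.assoc)
  then show ?thesis
    by (simp add: central_alg_hom_uminus[OF hom] add_eq_0_iff2)
qed

lemma cdet_sorted_nondistinct_columns:
  assumes S: "length S = length I" "set S \<subseteq> {1..m}" "sorted S" "\<not> distinct S"
  shows "cdet c q M I S = 0"
proof -
  have "\<not> sorted_wrt (<) S"
    using S(4) by (simp add: strict_sorted_iff)
  then obtain t where t: "Suc t < length S" "\<not> S ! t < S ! Suc t"
    by (auto simp: sorted_wrt_iff_nth_Suc_transp)
  moreover have "S ! t \<le> S ! Suc t"
    using S(3) t(1) by (simp add: sorted_iff_nth_Suc)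
  ultimately show ?thesis
    using cdet_adjacent_equal_columns[OF S(1,2)] S(1) by simp
qed

lemma cdet_permute_sorted_columns:
  assumes p: "parametric_matrix m p"
    and S: "length S = length I" "set S \<subseteq> {1..m}" "sorted S"
    and \<tau>: "\<tau> permutes {..<length I}"
  shows "cdet c q M I (permute_list \<tau> S) = c (eps p S \<tau>) * cdet c q M I S"
  using \<tau>
proof (induction rule: permutes_adjacent_transpose_induct)
  case id
  then show ?case
    unfolding eps_id central_alg_hom_one[OF hom] by simp
next
  case (step \<tau> t)
  let ?L = "permute_list \<tau> S"
  have \<tau>_lt: "\<tau> t < length S" "\<tau> (Suc t) < length S"
    using step.hyps(1,2) S(1) permutes_in_image by fastforce+
  have L: "length ?L = length I" "set ?L \<subseteq> {1..m}"
    using S step.hyps(1) by simp_all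
  have L_nth: "?L ! t = S ! \<tau> t" "?L ! Suc t = S ! \<tau> (Suc t)"
    using step.hyps(1,2) S(1) by (simp_all add: permute_list_nth)
  have perm_comp: "permute_list (\<tau> \<circ> adjacent_transpose t) S = permute_list (adjacent_transpose t) ?L"
    using step.hyps(2) S(1) by (simp add: permute_list_compose adjacent_transpose_permutes)
  have eps_comp: "eps p S (\<tau> \<circ> adjacent_transpose t) = - p (S ! \<tau> (Suc t)) (S ! \<tau> t) * eps p S \<tau>"
    using step.hyps(2,3) S(1) by (simp add: eps_comp_adjacent_transpose)
  have "S ! \<tau> t \<le> S ! \<tau> (Suc t)"
    using S(3) step.hyps(3) \<tau>_lt by (simp add: sorted_nth_mono)
  then consider "S ! \<tau> t < S ! \<tau> (Suc t)" | "S ! \<tau> t = S ! \<tau> (Suc t)"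
    by linarith
  then show ?case
  proof cases
    case 1
    then show ?thesis
      using cdet_swap_adjacent_columns[OF p L step.hyps(2)] unfolding perm_comp eps_comp
      by (simp add: L_nth step.IH central_alg_hom_mult[OF hom] central_alg_hom_uminus[OF hom] mult.assoc)
  next
    case 2
    then have "\<not> distinct S"
      using step.hyps(3) \<tau>_lt unfolding distinct_conv_nth by (metis less_irrefl)
    then have "cdet c q M I S = 0"
      by (rule cdet_sorted_nondistinct_columns[OF S])
    moreover have "permute_list (adjacent_transpose t) ?L = ?L"
      using step.hyps(2) S(1) 2 by (simp add: permute_list_adjacent_transpose_eq L_nth)
    ultimately show ?thesis
      unfolding perm_comp using step.IH by simp
  qed
qed

lemma cdet_nondistinct_columns:
  assumes p: "parametric_matrix m p"
    and L: "length L = length I" "set L \<subseteq> {1..m}" "\<not> distinct L"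
  shows "cdet c q M I L = 0"
proof -
  obtain \<tau> where \<tau>: "\<tau> permutes {..<length (sort L)}" "permute_list \<tau> (sort L) = L"
    by (rule mset_eq_permutation[of L "sort L"]) simp
  have "cdet c q M I (sort L) = 0"
    by (rule cdet_sorted_nondistinct_columns) (use L in simp_all)
  then show ?thesis
    using cdet_permute_sorted_columns[OF p, of "sort L" \<tau>] \<tau> L by simp
qed

end

section \<open>Multiplicativity\<close>

lemma cdet_matmul_expand:
  assumes comm: "\<forall>i\<in>{1..m}. \<forall>j\<in>{1..s}. \<forall>k\<in>{1..n}. \<forall>l\<in>{1..m}. N i j * M k l = M k l * N i j"
    and I: "set I \<subseteq> {1..n}" and K: "length K = length I" "set K \<subseteq> {1..s}"
  shows "cdet c q (matmul m M N) I K
       = (\<Sum>L | set L \<subseteq> {1..m} \<and> length L = length I. cdet c q M I L * perm_monomial N L K id)"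
proof -
  let ?lists = "{L. set L \<subseteq> {1..m} \<and> length L = length I}"
  have "perm_monomial (matmul m M N) I K \<sigma> = (\<Sum>L\<in>?lists. perm_monomial M I L \<sigma> * perm_monomial N L K id)"
    if \<sigma>: "\<sigma> permutes {..<length I}" for \<sigma>
  proof -
    have "perm_monomial (matmul m M N) I K \<sigma>
        = (\<Sum>L\<in>?lists. prod_list (map (\<lambda>k. M (I ! \<sigma> k) (L ! k) * N (L ! k) (K ! k)) [0..<length I]))"
      unfolding perm_monomial_def matmul_def by (rule prod_list_sum_expand)
    also have "\<dots> = (\<Sum>L\<in>?lists. perm_monomial M I L \<sigma> * perm_monomial N L K id)"
    proof (rule sum.cong[OF refl])
      fix L assume "L \<in> ?lists"
      then have L: "set L \<subseteq> {1..m}" "length L = length I"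
        by simp_all
      have "N (L ! k) (K ! k) * M (I ! \<sigma> k') (L ! k') = M (I ! \<sigma> k') (L ! k') * N (L ! k) (K ! k)"
        if "k < length I" "k' < length I" for k k'
      proof -
        have "\<sigma> k' < length I"
          using \<sigma> that(2) permutes_in_image by fastforce
        then have "L ! k \<in> {1..m}" "K ! k \<in> {1..s}" "I ! \<sigma> k' \<in> {1..n}" "L ! k' \<in> {1..m}"
          using L I K that by (metis nth_mem subsetD)+
        then show ?thesis
          using comm by blast
      qed
      then show "prod_list (map (\<lambda>k. M (I ! \<sigma> k) (L ! k) * N (L ! k) (K ! k)) [0..<length I])
          = perm_monomial M I L \<sigma> * perm_monomial N L K id"
        unfolding perm_monomial_def using L by (subst prod_list_map_mult_commute) auto
    qed
    finally show ?thesis .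
  qed
  then have "cdet c q (matmul m M N) I K
      = (\<Sum>\<sigma> | \<sigma> permutes {..<length I}. \<Sum>L\<in>?lists.
           c (eps q I \<sigma>) * perm_monomial M I L \<sigma> * perm_monomial N L K id)"
    unfolding cdet_eq_sum_perm_monomial by (simp add: sum_distrib_left mult.assoc)
  also have "\<dots> = (\<Sum>L\<in>?lists. \<Sum>\<sigma> | \<sigma> permutes {..<length I}.
           c (eps q I \<sigma>) * perm_monomial M I L \<sigma> * perm_monomial N L K id)"
    by (rule sum.swap)
  also have "\<dots> = (\<Sum>L\<in>?lists. cdet c q M I L * perm_monomial N L K id)"
    unfolding cdet_eq_sum_perm_monomial by (simp add: sum_distrib_right)
  finally show ?thesis .
qed

lemma perm_monomial_permute_list:
  assumes "\<tau> permutes {..<length J}"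
  shows "perm_monomial X (permute_list \<tau> J) K id = perm_monomial X J K \<tau>"
  unfolding perm_monomial_def using assms
  by (intro arg_cong[where f = prod_list] map_cong) (simp_all add: permute_list_nth)

lemma incr_multi_indices_empty:
  assumes "m < r"
  shows "incr_multi_indices r m = {}"
proof (rule ccontr)
  assume "incr_multi_indices r m \<noteq> {}"
  then obtain J where J: "length J = r" "distinct J" "set J \<subseteq> {1..m}"
    by (auto simp: incr_multi_indices_def strict_sorted_iff)
  then have "r \<le> card {1..m}"
    using card_mono[OF _ J(3)] distinct_card[OF J(2)] by simp
  then show False
    using assms by simp
qed

lemma incr_multi_indices_self: "incr_multi_indices n n = {[1..<n+1]}"
proof (intro set_eqI iffI)
  fix J assume "J \<in> incr_multi_indices n n"
  then have J: "length J = n" "sorted J" "distinct J" "set J \<subseteq> {1..n}"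
    by (auto simp: incr_multi_indices_def strict_sorted_iff)
  then have "set J = {1..n}"
    using distinct_card[OF J(3)] by (intro card_subset_eq) simp_all
  then have "J = [1..<n+1]"
    using J by (intro sorted_distinct_set_unique) (simp_all add: atLeastLessThanSuc_atLeastAtMost del: upt_Suc)
  then show "J \<in> {[1..<n+1]}"
    by simp
qed (simp add: incr_multi_indices_def atLeastLessThanSuc_atLeastAtMost del: upt_Suc)

lemma sum_distinct_lists_eq_sum_incr_multi_indices:
  "(\<Sum>L | set L \<subseteq> {1..m} \<and> length L = r \<and> distinct L. h L)
     = (\<Sum>J\<in>incr_multi_indices r m. \<Sum>\<tau> | \<tau> permutes {..<r}. h (permute_list \<tau> J))"
proof -
  let ?P = "{\<tau>. \<tau> permutes {..<r}}"
  let ?f = "\<lambda>(J, \<tau>). permute_list \<tau> J"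
  have inj: "inj_on ?f (incr_multi_indices r m \<times> ?P)"
  proof (rule inj_onI, clarsimp)
    fix J \<tau> J' \<tau>'
    assume J: "J \<in> incr_multi_indices r m" "J' \<in> incr_multi_indices r m"
      and \<tau>: "\<tau> permutes {..<r}" "\<tau>' permutes {..<r}"
      and eq: "permute_list \<tau> J = permute_list \<tau>' J'"
    have sorted: "sorted J" "distinct J" "sorted J'" "length J = r" "length J' = r"
      using J by (auto simp: incr_multi_indices_def strict_sorted_iff)
    have "J = sort (permute_list \<tau> J)"
      using \<tau>(1) sorted by (simp add: properties_for_sort)
    also have "\<dots> = J'"
      unfolding eq using \<tau>(2) sorted by (simp add: properties_for_sort)
    finally have "J = J'" .
    moreover have "\<tau> k = \<tau>' k" for k
    proof (cases "k < r")
      case True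
      then have "J ! \<tau> k = J ! \<tau>' k" "\<tau> k < r" "\<tau>' k < r"
        using eq \<open>J = J'\<close> \<tau> sorted permutes_in_image by (metis permute_list_nth lessThan_iff)+
      then show ?thesis
        using sorted by (simp add: nth_eq_iff_index_eq)
    next
      case False
      then show ?thesis
        using \<tau> by (simp add: permutes_def)
    qed
    ultimately show "J = J' \<and> \<tau> = \<tau>'"
      by auto
  qed
  have image: "?f ` (incr_multi_indices r m \<times> ?P) = {L. set L \<subseteq> {1..m} \<and> length L = r \<and> distinct L}"
  proof (intro set_eqI iffI)
    fix L assume "L \<in> ?f ` (incr_multi_indices r m \<times> ?P)"
    then show "L \<in> {L. set L \<subseteq> {1..m} \<and> length L = r \<and> distinct L}"
      by (auto simp: incr_multi_indices_def strict_sorted_iff)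
  next
    fix L assume L: "L \<in> {L. set L \<subseteq> {1..m} \<and> length L = r \<and> distinct L}"
    obtain \<tau> where \<tau>: "\<tau> permutes {..<length (sort L)}" "permute_list \<tau> (sort L) = L"
      by (rule mset_eq_permutation[of L "sort L"]) simp
    have "sort L \<in> incr_multi_indices r m"
      using L by (simp add: incr_multi_indices_def strict_sorted_iff)
    then show "L \<in> ?f ` (incr_multi_indices r m \<times> ?P)"
      using \<tau> L by (intro image_eqI[of _ _ "(sort L, \<tau>)"]) simp_all
  qed
  have "(\<Sum>J\<in>incr_multi_indices r m. \<Sum>\<tau>\<in>?P. h (permute_list \<tau> J))
      = (\<Sum>x\<in>incr_multi_indices r m \<times> ?P. h (?f x))"
    by (simp add: sum.cartesian_product prod.case_distrib)
  also have "\<dots> = (\<Sum>L | set L \<subseteq> {1..m} \<and> length L = r \<and> distinct L. h L)"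
    using sum.reindex[OF inj, of h] image by simp
  finally show ?thesis ..
qed

lemma cdet_matmul_cauchy_binet:
  fixes c :: "complex \<Rightarrow> 'a::ring_1"
  assumes hom: "central_alg_hom c" and p: "parametric_matrix m p" and manin: "manin c n m q p M"
    and comm: "\<forall>i\<in>{1..m}. \<forall>j\<in>{1..s}. \<forall>k\<in>{1..n}. \<forall>l\<in>{1..m}. N i j * M k l = M k l * N i j"
    and I: "sorted_wrt (<) I" "set I \<subseteq> {1..n}"
    and K: "length K = length I" "set K \<subseteq> {1..s}"
  shows "cdet c q (matmul m M N) I K
       = (\<Sum>J\<in>incr_multi_indices (length I) m. cdet c q M I J * cdet c p N J K)"
proof -
  let ?r = "length I"
  let ?lists = "{L. set L \<subseteq> {1..m} \<and> length L = ?r}"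
  let ?distinct_lists = "{L. set L \<subseteq> {1..m} \<and> length L = ?r \<and> distinct L}"
  have "cdet c q (matmul m M N) I K = (\<Sum>L\<in>?lists. cdet c q M I L * perm_monomial N L K id)"
    by (rule cdet_matmul_expand[OF comm I(2) K])
  also have "\<dots> = (\<Sum>L\<in>?distinct_lists. cdet c q M I L * perm_monomial N L K id)"
    using cdet_nondistinct_columns[OF hom manin I p]
    by (intro sum.mono_neutral_right) (auto intro: finite_lists_length_eq)
  also have "\<dots> = (\<Sum>J\<in>incr_multi_indices ?r m. \<Sum>\<tau> | \<tau> permutes {..<?r}.
      cdet c q M I (permute_list \<tau> J) * perm_monomial N (permute_list \<tau> J) K id)"
    by (rule sum_distinct_lists_eq_sum_incr_multi_indices)
  also have "\<dots> = (\<Sum>J\<in>incr_multi_indices ?r m. cdet c q M I J * cdet c p N J K)"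
  proof (rule sum.cong[OF refl])
    fix J assume "J \<in> incr_multi_indices ?r m"
    then have J: "length J = ?r" "set J \<subseteq> {1..m}" "sorted J"
      by (auto simp: incr_multi_indices_def strict_sorted_iff)
    have "cdet c q M I (permute_list \<tau> J) * perm_monomial N (permute_list \<tau> J) K id
        = cdet c q M I J * (c (eps p J \<tau>) * perm_monomial N J K \<tau>)"
      if "\<tau> permutes {..<?r}" for \<tau>
      using that J cdet_permute_sorted_columns[OF hom manin I p J(1,2,3)]
        central_alg_hom_commute[OF hom, of "eps p J \<tau>" "cdet c q M I J"]
      by (simp add: perm_monomial_permute_list mult.assoc)
    then show "(\<Sum>\<tau> | \<tau> permutes {..<?r}. cdet c q M I (permute_list \<tau> J) * perm_monomial N (permute_list \<tau> J) K id)
        = cdet c q M I J * cdet c p N J K"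
      unfolding cdet_eq_sum_perm_monomial[of c p N J] J(1) by (simp add: sum_distrib_left)
  qed
  finally show ?thesis .
qed

theorem mainTheorem5:
  fixes c :: "complex \<Rightarrow> 'a::ring_1"
    and n m s :: nat
    and q p :: "nat \<Rightarrow> nat \<Rightarrow> complex"
    and M N :: "nat \<Rightarrow> nat \<Rightarrow> 'a"
    and I K :: "nat list"
  assumes "central_alg_hom c"
    and "parametric_matrix n q" and "parametric_matrix m p"
    and "manin c n m q p M"
    and "\<forall>i\<in>{1..m}. \<forall>j\<in>{1..s}. \<forall>k\<in>{1..n}. \<forall>l\<in>{1..m}. N i j * M k l = M k l * N i j"
    and "sorted_wrt (<) I" and "set I \<subseteq> {1..n}"
    and "length K = length I" and "set K \<subseteq> {1..s}"
  shows "(length I \<le> m \<longrightarrow>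
           cdet c q (matmul m M N) I K =
             (\<Sum>J\<in>incr_multi_indices (length I) m. cdet c q M I J * cdet c p N J K))
       \<and> (length I > m \<longrightarrow> cdet c q (matmul m M N) I K = 0)
       \<and> (m = n \<and> s = n \<longrightarrow>
           cdet c q (matmul m M N) [1..<n+1] [1..<n+1] =
             cdet c q M [1..<n+1] [1..<n+1] * cdet c p N [1..<n+1] [1..<n+1])"
proof -
  note cauchy_binet = cdet_matmul_cauchy_binet[OF assms(1,3,4,5)]
  have "cdet c q (matmul m M N) I K
      = (\<Sum>J\<in>incr_multi_indices (length I) m. cdet c q M I J * cdet c p N J K)"
    using cauchy_binet assms(6-9) .
  moreover have "cdet c q (matmul m M N) [1..<n+1] [1..<n+1] =
      cdet c q M [1..<n+1] [1..<n+1] * cdet c p N [1..<n+1] [1..<n+1]" if "m = n \<and> s = n"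
    using cauchy_binet[of "[1..<n+1]" "[1..<n+1]"] that incr_multi_indices_self[of n]
    by (simp add: atLeastLessThanSuc_atLeastAtMost del: upt_Suc)
  ultimately show ?thesis
    using incr_multi_indices_empty[of m "length I"] by auto
qed

end
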